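(* Let $d\le p$ be positive integers, $\mathcal{U}\subset\mathbb{R}^p$ a nonempty closed convex cone, $G$ a real $d\times p$ matrix with $\{Gu:u\in\mathcal{U}\}=\mathbb{R}^d$, and $\kappa\in\mathbb{R}^p$. Let $\mathcal{U}_1=\{u\in\mathcal{U}:|Gu|=1\}$ and $\mathcal{H}(q)=\sup_{u\in\mathcal{U}_1}\{-Gu\cdot q-\kappa\cdot u\}\in(-\infty,\infty]$ for $q\in\mathbb{R}^d$. The following are equivalent: (i) $\mathcal{H}(0)<\infty$; (ii) $\mathcal{H}(q)<\infty$ for some $q\in\mathbb{R}^d$; (iii) $\mathcal{H}(q)<\infty$ for all $q\in\mathbb{R}^d$; (iv) there exists $c_1\in(0,\infty)$ such that $(\kappa\cdot u)^-\le c_1|Gu|$ for all $u\in\mathcal{U}$; (v) the set $\{u\in\mathcal{U}:|Gu|\le\varepsilon,\ \kappa\cdot u\le-1\}$ is empty for all $\varepsilon>0$ sufficiently small.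
   Context: $|\cdot|$ is the Euclidean norm and $x^-=\max(-x,0)$. *)

theory Defs
  imports "HOL-Analysis.Analysis"
begin

definition negpart :: "real \<Rightarrow> real" where
  "negpart x = max (- x) 0"

definition U1set :: "(real^'p) set \<Rightarrow> real^'p^'d \<Rightarrow> (real^'p) set" where
  "U1set U G = {u \<in> U. norm (G *v u) = 1}"

definition Hfun :: "(real^'p) set \<Rightarrow> real^'p^'d \<Rightarrow> real^'p \<Rightarrow> real^'d \<Rightarrow> ereal" where
  "Hfun U G \<kappa> q = (SUP u \<in> U1set U G. ereal (- ((G *v u) \<bullet> q) - \<kappa> \<bullet> u))"

end

theory Submission
  imports Defs
begin

text \<open>Since \<open>\<bar>Gu \<cdot> q\<bar> \<le> \<bar>q\<bar>\<close> on \<open>\<U>\<^sub>1\<close>, whether \<open>\<H>(q)\<close> is finite does not depend on \<open>q\<close>: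
  it just says that \<open>\<kappa> \<cdot> u\<close> is bounded below on \<open>\<U>\<^sub>1\<close>. Rescaling along the cone turns a lower
  bound \<open>-c\<close> on \<open>\<U>\<^sub>1\<close> into \<open>(\<kappa> \<cdot> u)\<^sup>- \<le> c \<bar>Gu\<bar>\<close> wherever \<open>Gu \<noteq> 0\<close>. On the kernel of \<open>G\<close> we
  need \<open>\<kappa> \<cdot> u \<ge> 0\<close>: otherwise, for a point \<open>w \<in> \<U>\<^sub>1\<close> (which exists by surjectivity), the
  points \<open>w + t u\<close> stay in \<open>\<U>\<^sub>1\<close> while \<open>\<kappa> \<cdot> (w + t u) \<rightarrow> -\<infinity>\<close>. Finally, condition (v) is the
  same linear bound, rescaled to the level set \<open>\<kappa> \<cdot> u = -1\<close>.\<close>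

lemma bounded_above_iff_of_bounded_diff:
  fixes f g :: "'a \<Rightarrow> real"
  assumes "\<And>x. x \<in> S \<Longrightarrow> \<bar>f x - g x\<bar> \<le> C"
  shows "(\<exists>M. \<forall>x\<in>S. f x \<le> M) \<longleftrightarrow> (\<exists>M. \<forall>x\<in>S. g x \<le> M)"
proof -
  have "g x \<le> f x + C" "f x \<le> g x + C" if "x \<in> S" for x
    using assms[OF that] by auto
  then show ?thesis
    by (meson add_right_mono order_trans)
qed

lemma SUP_ereal_less_PInf_iff:
  "(SUP x\<in>S. ereal (f x)) < \<infinity> \<longleftrightarrow> (\<exists>M. \<forall>x\<in>S. f x \<le> M)"
proof
  assume "(SUP x\<in>S. ereal (f x)) < \<infinity>"
  then have "(SUP x\<in>S. ereal (f x)) \<noteq> \<infinity>" by (rule less_imp_neq)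
  then obtain n :: nat where n: "(SUP x\<in>S. ereal (f x)) < ereal (real n)"
    unfolding less_PInf_Ex_of_nat by blast
  have "ereal (f x) < ereal (real n)" if "x \<in> S" for x
    using SUP_upper[OF that, of "\<lambda>x. ereal (f x)"] n by (rule order_le_less_trans)
  then have "f x \<le> real n" if "x \<in> S" for x
    using that by (simp add: less_imp_le)
  then show "\<exists>M. \<forall>x\<in>S. f x \<le> M" by blast
next
  assume "\<exists>M. \<forall>x\<in>S. f x \<le> M"
  then obtain M where "\<forall>x\<in>S. f x \<le> M" by blast
  then have "(SUP x\<in>S. ereal (f x)) \<le> ereal M" by (intro SUP_least) simp
  then show "(SUP x\<in>S. ereal (f x)) < \<infinity>" by (rule order_le_less_trans) simp
qed

lemma Hfun_less_PInf_iff: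
  "Hfun U G \<kappa> q < \<infinity> \<longleftrightarrow> (\<exists>M. \<forall>u\<in>U. norm (G *v u) = 1 \<longrightarrow> - (\<kappa> \<bullet> u) \<le> M)"
proof -
  have "\<bar>(- ((G *v u) \<bullet> q) - \<kappa> \<bullet> u) - (- (\<kappa> \<bullet> u))\<bar> \<le> norm q" if "u \<in> U1set U G" for u
    using that Cauchy_Schwarz_ineq2[of "G *v u" q] by (simp add: U1set_def)
  then have "Hfun U G \<kappa> q < \<infinity> \<longleftrightarrow> (\<exists>M. \<forall>u\<in>U1set U G. - (\<kappa> \<bullet> u) \<le> M)"
    unfolding Hfun_def SUP_ereal_less_PInf_iff by (rule bounded_above_iff_of_bounded_diff)
  then show ?thesis by (simp add: U1set_def Ball_def imp_conjL)
qed

lemma inner_nonneg_on_kernel_of_convex_cone: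
  fixes f :: "'a::real_inner \<Rightarrow> 'b::real_normed_vector"
  assumes "convex U" "cone U" "linear f"
    and "w \<in> U" "norm (f w) = 1"
    and bound: "\<And>v. v \<in> U \<Longrightarrow> norm (f v) = 1 \<Longrightarrow> - (\<kappa> \<bullet> v) \<le> M"
    and "u \<in> U" "f u = 0"
  shows "\<kappa> \<bullet> u \<ge> 0"
proof (rule ccontr)
  assume neg: "\<not> \<kappa> \<bullet> u \<ge> 0"
  define t where "t = (\<bar>M + \<kappa> \<bullet> w\<bar> + 1) / - (\<kappa> \<bullet> u)"
  have "t > 0"
    unfolding t_def using neg by (intro divide_pos_pos) auto
  moreover have "\<forall>x\<in>U. \<forall>y\<in>U. x + y \<in> U" "\<forall>x\<in>U. \<forall>c\<ge>0. c *\<^sub>R x \<in> U"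
    using convex_cone[of U] assms(1,2) by auto
  ultimately have "w + t *\<^sub>R u \<in> U"
    using \<open>w \<in> U\<close> \<open>u \<in> U\<close> by simp
  moreover have "f (w + t *\<^sub>R u) = f w"
    using \<open>linear f\<close> \<open>f u = 0\<close> by (simp add: linear_add linear_scale)
  ultimately have "- (\<kappa> \<bullet> (w + t *\<^sub>R u)) \<le> M"
    using bound \<open>norm (f w) = 1\<close> by simp
  moreover have "t * (\<kappa> \<bullet> u) = - (\<bar>M + \<kappa> \<bullet> w\<bar> + 1)"
    using neg by (simp add: t_def)
  then have "\<kappa> \<bullet> (w + t *\<^sub>R u) = \<kappa> \<bullet> w - (\<bar>M + \<kappa> \<bullet> w\<bar> + 1)"
    by (simp add: inner_add_right)
  ultimately show False by linarith
qed

lemma convex_cone_bounded_below_iff_negpart_le: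
  fixes f :: "'a::real_inner \<Rightarrow> 'b::real_normed_vector"
  assumes "convex U" "cone U" "linear f" "w \<in> U" "norm (f w) = 1"
  shows "(\<exists>M. \<forall>u\<in>U. norm (f u) = 1 \<longrightarrow> - (\<kappa> \<bullet> u) \<le> M)
     \<longleftrightarrow> (\<exists>c>0. \<forall>u\<in>U. negpart (\<kappa> \<bullet> u) \<le> c * norm (f u))"
proof
  assume "\<exists>M. \<forall>u\<in>U. norm (f u) = 1 \<longrightarrow> - (\<kappa> \<bullet> u) \<le> M"
  then obtain M where M: "\<And>u. u \<in> U \<Longrightarrow> norm (f u) = 1 \<Longrightarrow> - (\<kappa> \<bullet> u) \<le> M" by blast
  have "negpart (\<kappa> \<bullet> u) \<le> max M 1 * norm (f u)" if "u \<in> U" for u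
  proof (cases "f u = 0")
    case True
    then show ?thesis
      using inner_nonneg_on_kernel_of_convex_cone[OF assms M that] by (simp add: negpart_def)
  next
    case False
    define n where "n = norm (f u)"
    have "n > 0" using False by (simp add: n_def)
    then have "(1/n) *\<^sub>R u \<in> U" "norm (f ((1/n) *\<^sub>R u)) = 1"
      using \<open>cone U\<close> \<open>u \<in> U\<close> \<open>linear f\<close> by (auto simp: cone_def n_def linear_scale)
    then have "- (\<kappa> \<bullet> u) / n \<le> M" using M by fastforce
    then have "- (\<kappa> \<bullet> u) \<le> M * n" using \<open>n > 0\<close> by (simp add: field_simps)
    also have "\<dots> \<le> max M 1 * n" using \<open>n > 0\<close> by (intro mult_right_mono) auto
    finally show ?thesis using \<open>n > 0\<close> by (simp add: negpart_def n_def)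
  qed
  then show "\<exists>c>0. \<forall>u\<in>U. negpart (\<kappa> \<bullet> u) \<le> c * norm (f u)"
    by (intro exI[of _ "max M 1"]) auto
next
  assume "\<exists>c>0. \<forall>u\<in>U. negpart (\<kappa> \<bullet> u) \<le> c * norm (f u)"
  then obtain c where "\<forall>u\<in>U. negpart (\<kappa> \<bullet> u) \<le> c * norm (f u)" by blast
  then have "\<forall>u\<in>U. norm (f u) = 1 \<longrightarrow> - (\<kappa> \<bullet> u) \<le> c"
    by (force simp: negpart_def)
  then show "\<exists>M. \<forall>u\<in>U. norm (f u) = 1 \<longrightarrow> - (\<kappa> \<bullet> u) \<le> M" by blast
qed

lemma cone_negpart_le_iff_small_sublevel_empty:
  fixes f :: "'a::real_inner \<Rightarrow> 'b::real_normed_vector"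
  assumes "cone U" "linear f"
  shows "(\<exists>c>0. \<forall>u\<in>U. negpart (\<kappa> \<bullet> u) \<le> c * norm (f u))
     \<longleftrightarrow> (\<exists>\<epsilon>0>0. \<forall>\<epsilon>. 0 < \<epsilon> \<and> \<epsilon> \<le> \<epsilon>0 \<longrightarrow> {u \<in> U. norm (f u) \<le> \<epsilon> \<and> \<kappa> \<bullet> u \<le> -1} = {})"
proof
  assume "\<exists>c>0. \<forall>u\<in>U. negpart (\<kappa> \<bullet> u) \<le> c * norm (f u)"
  then obtain c where c: "c > 0" "\<And>u. u \<in> U \<Longrightarrow> negpart (\<kappa> \<bullet> u) \<le> c * norm (f u)" by blast
  have "{u \<in> U. norm (f u) \<le> \<epsilon> \<and> \<kappa> \<bullet> u \<le> -1} = {}" if "\<epsilon> \<le> 1 / (2 * c)" for \<epsilon>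
  proof (rule ccontr)
    assume "{u \<in> U. norm (f u) \<le> \<epsilon> \<and> \<kappa> \<bullet> u \<le> -1} \<noteq> {}"
    then obtain u where "u \<in> U" "norm (f u) \<le> \<epsilon>" "\<kappa> \<bullet> u \<le> -1" by blast
    have "1 \<le> negpart (\<kappa> \<bullet> u)" using \<open>\<kappa> \<bullet> u \<le> -1\<close> by (simp add: negpart_def)
    also have "\<dots> \<le> c * norm (f u)" using c(2) \<open>u \<in> U\<close> .
    also have "\<dots> \<le> c * (1 / (2 * c))"
      using c(1) that \<open>norm (f u) \<le> \<epsilon>\<close> by (intro mult_left_mono) auto
    finally show False using c(1) by simp
  qed
  then show "\<exists>\<epsilon>0>0. \<forall>\<epsilon>. 0 < \<epsilon> \<and> \<epsilon> \<le> \<epsilon>0 \<longrightarrow> {u \<in> U. norm (f u) \<le> \<epsilon> \<and> \<kappa> \<bullet> u \<le> -1} = {}"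
    using c(1) by (intro exI[of _ "1 / (2 * c)"]) auto
next
  assume "\<exists>\<epsilon>0>0. \<forall>\<epsilon>. 0 < \<epsilon> \<and> \<epsilon> \<le> \<epsilon>0 \<longrightarrow> {u \<in> U. norm (f u) \<le> \<epsilon> \<and> \<kappa> \<bullet> u \<le> -1} = {}"
  then obtain e where "e > 0" and "{u \<in> U. norm (f u) \<le> e \<and> \<kappa> \<bullet> u \<le> -1} = {}"
    by blast
  then have e: "e > 0" "\<And>u. u \<in> U \<Longrightarrow> \<kappa> \<bullet> u \<le> -1 \<Longrightarrow> e < norm (f u)"
    by (auto simp: set_eq_iff not_le)
  have "negpart (\<kappa> \<bullet> u) \<le> (1 / e) * norm (f u)" if "u \<in> U" for u
  proof (cases "\<kappa> \<bullet> u < 0")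
    case False
    then show ?thesis using e(1) by (simp add: negpart_def)
  next
    case True
    define s where "s = - (\<kappa> \<bullet> u)"
    have "s > 0" using True by (simp add: s_def)
    then have "(1/s) *\<^sub>R u \<in> U"
      using \<open>cone U\<close> \<open>u \<in> U\<close> by (simp add: cone_def)
    moreover have "\<kappa> \<bullet> ((1/s) *\<^sub>R u) = -1"
      using \<open>s > 0\<close> by (simp add: s_def)
    ultimately have "e < norm (f u) / s"
      using e(2) \<open>s > 0\<close> \<open>linear f\<close> by (fastforce simp: linear_scale)
    then have "s \<le> (1 / e) * norm (f u)"
      using e(1) \<open>s > 0\<close> by (simp add: field_simps)
    then show ?thesis using e(1) by (simp add: negpart_def s_def)
  qed
  then show "\<exists>c>0. \<forall>u\<in>U. negpart (\<kappa> \<bullet> u) \<le> c * norm (f u)"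
    using e(1) by (intro exI[of _ "1 / e"]) auto
qed

theorem lemmaA1:
  fixes U :: "(real^'p) set" and G :: "real^'p^'d" and \<kappa> :: "real^'p"
  assumes "CARD('d) \<le> CARD('p)"
    and "U \<noteq> {}" and "closed U" and "convex U" and "cone U"
    and "(\<lambda>u. G *v u) ` U = UNIV"
  shows "(Hfun U G \<kappa> 0 < \<infinity> \<longleftrightarrow> (\<exists>q. Hfun U G \<kappa> q < \<infinity>))
       \<and> (Hfun U G \<kappa> 0 < \<infinity> \<longleftrightarrow> (\<forall>q. Hfun U G \<kappa> q < \<infinity>))
       \<and> (Hfun U G \<kappa> 0 < \<infinity> \<longleftrightarrow>
            (\<exists>c1>0. \<forall>u\<in>U. negpart (\<kappa> \<bullet> u) \<le> c1 * norm (G *v u)))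
       \<and> (Hfun U G \<kappa> 0 < \<infinity> \<longleftrightarrow>
            (\<exists>\<epsilon>0>0. \<forall>\<epsilon>. 0 < \<epsilon> \<and> \<epsilon> \<le> \<epsilon>0 \<longrightarrow>
               {u \<in> U. norm (G *v u) \<le> \<epsilon> \<and> \<kappa> \<bullet> u \<le> -1} = {}))"
proof -
  obtain w where w: "w \<in> U" "G *v w = axis undefined 1"
    using assms(6) by (metis UNIV_I imageE)
  then have "norm (G *v w) = 1" by simp
  note negpart_le = convex_cone_bounded_below_iff_negpart_le
    [OF assms(4,5) matrix_vector_mul_linear w(1) this, of \<kappa>]
  note sublevel = cone_negpart_le_iff_small_sublevel_empty
    [OF assms(5) matrix_vector_mul_linear, of \<kappa> G]
  show ?thesis
    unfolding Hfun_less_PInf_iff negpart_le sublevel by simp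
qed

end
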